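(* The following bilinear equations hold for all $k,N\in\mathbb{Z}$: \begin{align*} &Q^{(-3k+4N+2)/2}\gamma^{2}{\alpha_0}^{-3}\tau^{k+1}_{N}\tau^{k-2}_{N+1} -Q^{-3k+4N+2}\gamma^{4}{\alpha_0}^{-6}\tau^{k-1}_{N}\tau^{k}_{N+1} -\tau^{k-1}_{N+1}\tau^{k}_{N}=0,\\ &Q^{(-3k-4N-2)/2}\gamma^{-2}{\alpha_0}^{-3}\tau^{k+1}_{N+1}\tau^{k-2}_{N} -Q^{-3k-4N-2}\gamma^{-4}{\alpha_0}^{-6}\tau^{k}_{N}\tau^{k-1}_{N+1} -\tau^{k}_{N+1}\tau^{k-1}_{N}=0,\\ &\tau^{k}_{N+1}\tau^{k+1}_{N-1} -Q^{(k-4N+1)/2}\gamma^{-2}\alpha_0\tau^{k+2}_{N}\tau^{k-1}_{N} -Q^{-k+4N-1}\gamma^{4}{\alpha_0}^{-2}\tau^{k}_{N}\tau^{k+1}_{N}=0. \end{align*}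
   Context: Let $q,c,a_0,a_1,a_2\in\mathbb{C}^\times$ with $a_0a_1a_2=q$, and let $\tau_i,\overline{\tau}_i$ ($i\in\mathbb{Z}/3\mathbb{Z}$) be variables (the $\tau$ functions of the $q$-Painlevé III system, related to $f_i=q^{1/3}c^{2/3}\overline{\tau}_{i+1}\tau_{i-1}/(\tau_{i+1}\overline{\tau}_{i-1})$). The extended affine Weyl group $\widetilde{W}((A_2+A_1)^{(1)})=\langle s_0,s_1,s_2,\pi,w_0,w_1,r\rangle$ acts on them (elements act on functions from the right, $w.F(a_i,\tau_j)=F(a_i.w,\tau_j.w)$) by: $s_i(a_i)=a_i^{-1}$, $s_i(a_{i\pm1})=a_{i\pm1}a_i$, $\pi(a_i)=a_{i+1}$, $w_0,w_1,r$ fix all $a_i$; $s_i(\tau_i)=\dfrac{u_i\tau_{i+1}\overline{\tau}_{i-1}+\overline{\tau}_{i+1}\tau_{i-1}}{u_i^{1/2}\overline{\tau}_i}$, $s_i(\overline{\tau}_i)=\dfrac{v_i\overline{\tau}_{i+1}\tau_{i-1}+\tau_{i+1}\overline{\tau}_{i-1}}{v_i^{1/2}\tau_i}$, $s_i$ fixes $\tau_j,\overline{\tau}_j$ for $j\neq i$; $\pi(\tau_i)=\tau_{i+1}$, $\pi(\overline{\tau}_i)=\overline{\tau}_{i+1}$; $w_0(\overline{\tau}_i)=\dfrac{a_{i+1}^{1/3}(\overline{\tau}_i\tau_{i+1}\tau_{i+2}+u_{i-1}\tau_i\overline{\tau}_{i+1}\tau_{i+2}+u_{i+1}^{-1}\tau_i\tau_{i+1}\overline{\tau}_{i+2})}{a_{i+2}^{1/3}\overline{\tau}_{i+1}\overline{\tau}_{i+2}}$,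 $w_0(\tau_i)=\tau_i$; $r(\tau_i)=\overline{\tau}_i$, $r(\overline{\tau}_i)=\tau_i$; where $u_i=q^{-1/3}c^{-2/3}a_i$, $v_i=q^{1/3}c^{2/3}a_i$. The translation $T_4=rw_0$ fixes $a_0,a_1,a_2$ and maps $c\mapsto qc$. Set $R_1=\pi^2s_1$ (so $R_1^2=T_1=\pi s_2 s_1$) and specialize $a_2=q^{1/2}$; then $R_1$ acts on parameters as $(a_0,a_1,c)\mapsto(q^{1/2}a_0,q^{-1/2}a_1,c)$ and is the time evolution of the $q$-Painlevé II equation. Define $\tau^k_N=R_1^kT_4^N(\tau_1)$ for $k,N\in\mathbb{Z}$ (so $\tau_0=\tau^{-2}_0$, $\tau_1=\tau^0_0$, $\tau_2=\tau^{-1}_0$, $\overline{\tau}_0=\tau^{-2}_1$, $\overline{\tau}_1=\tau^0_1$, $\overline{\tau}_2=\tau^{-1}_1$), and put $\alpha_0=a_0^{1/6}$, $\gamma=c^{1/6}$, $Q=q^{1/6}$. *)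

theory Defs
  imports Complex_Main
begin

text \<open>
  To make all fractional powers occurring in the paper single-valued and
  compatible with the group action, we use root coordinates:
    qr = q^(1/12)      (so Q = q^(1/6) = qr^2, Q^(1/2) = qr, q = qr^12)
    ar i = a_i^(1/6)   (index i read mod 3; alpha_0 = ar 0)
    cr = c^(1/6)       (gamma = cr)
  and tau i, taub i are the values of tau_i, overline-tau_i (index mod 3).
  Then a_i^(1/3) = ar i ^ 2, u_i = ar i ^ 6 / (qr^4 cr^4),
  u_i^(1/2) = ar i ^ 3 / (qr^2 cr^2), v_i = qr^4 cr^4 ar i ^ 6,
  v_i^(1/2) = qr^2 cr^2 ar i ^ 3.
\<close>

record pt =
  qr   :: complex
  ar   :: "nat \<Rightarrow> complex"
  cr   :: complex
  tau  :: "nat \<Rightarrow> complex"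
  taub :: "nat \<Rightarrow> complex"

definition A :: "pt \<Rightarrow> nat \<Rightarrow> complex" where "A x i = ar x (i mod 3)"
definition T :: "pt \<Rightarrow> nat \<Rightarrow> complex" where "T x i = tau x (i mod 3)"
definition TB :: "pt \<Rightarrow> nat \<Rightarrow> complex" where "TB x i = taub x (i mod 3)"

definition uu :: "pt \<Rightarrow> nat \<Rightarrow> complex" where
  "uu x i = A x i ^ 6 / (qr x ^ 4 * cr x ^ 4)"
definition uh :: "pt \<Rightarrow> nat \<Rightarrow> complex" where
  "uh x i = A x i ^ 3 / (qr x ^ 2 * cr x ^ 2)"
definition vv :: "pt \<Rightarrow> nat \<Rightarrow> complex" where
  "vv x i = qr x ^ 4 * cr x ^ 4 * A x i ^ 6"
definition vh :: "pt \<Rightarrow> nat \<Rightarrow> complex" where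
  "vh x i = qr x ^ 2 * cr x ^ 2 * A x i ^ 3"

text \<open>
  Each generator w is represented by the (partial) map phi_w of points with
  (w.F)(x) = F(phi_w x); the map is undefined (None) where a denominator
  vanishes.  For a word w1 ... wn acting from the right,
  phi_(w1...wn) = phi_wn o ... o phi_w1, i.e. the maps are applied in word order.
\<close>

definition s_map :: "nat \<Rightarrow> pt \<Rightarrow> pt option" where
  "s_map i x =
    (if qr x \<noteq> 0 \<and> cr x \<noteq> 0 \<and> A x i \<noteq> 0 \<and> T x i \<noteq> 0 \<and> TB x i \<noteq> 0 then
      Some \<lparr> qr = qr x,
             ar = (\<lambda>j. if j mod 3 = i mod 3 then 1 / A x i else A x j * A x i),
             cr = cr x,
             tau = (\<lambda>j. if j mod 3 = i mod 3 then
                      (uu x i * T x (i+1) * TB x (i+2) + TB x (i+1) * T x (i+2)) / (uh x i * TB x i)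
                    else T x j),
             taub = (\<lambda>j. if j mod 3 = i mod 3 then
                      (vv x i * TB x (i+1) * T x (i+2) + T x (i+1) * TB x (i+2)) / (vh x i * T x i)
                    else TB x j) \<rparr>
     else None)"

definition pi_map :: "pt \<Rightarrow> pt option" where
  "pi_map x = Some \<lparr> qr = qr x, ar = (\<lambda>j. A x (j+1)), cr = cr x,
                     tau = (\<lambda>j. T x (j+1)), taub = (\<lambda>j. TB x (j+1)) \<rparr>"

definition w0_map :: "pt \<Rightarrow> pt option" where
  "w0_map x =
    (if qr x \<noteq> 0 \<and> cr x \<noteq> 0 \<and> (\<forall>i<3. A x i \<noteq> 0 \<and> TB x i \<noteq> 0) then
      Some \<lparr> qr = qr x, ar = ar x, cr = 1 / cr x, tau = tau x,
             taub = (\<lambda>i. A x (i+1) ^ 2 *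
                      (TB x i * T x (i+1) * T x (i+2)
                       + uu x (i+2) * T x i * TB x (i+1) * T x (i+2)
                       + T x i * T x (i+1) * TB x (i+2) / uu x (i+1))
                      / (A x (i+2) ^ 2 * TB x (i+1) * TB x (i+2))) \<rparr>
     else None)"

definition r_map :: "pt \<Rightarrow> pt option" where
  "r_map x =
    (if qr x \<noteq> 0 \<and> cr x \<noteq> 0 then
      Some \<lparr> qr = qr x, ar = ar x, cr = 1 / (qr x ^ 2 * cr x), tau = taub x, taub = tau x \<rparr>
     else None)"

fun word_map :: "(pt \<Rightarrow> pt option) list \<Rightarrow> pt \<Rightarrow> pt option" where
  "word_map [] x = Some x"
| "word_map (f # fs) x = Option.bind (f x) (word_map fs)"

definition R1_map :: "pt \<Rightarrow> pt option" where
  "R1_map = word_map [pi_map, pi_map, s_map 1]"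
definition R1inv_map :: "pt \<Rightarrow> pt option" where
  "R1inv_map = word_map [s_map 1, pi_map]"
definition T4_map :: "pt \<Rightarrow> pt option" where
  "T4_map = word_map [r_map, w0_map]"
definition T4inv_map :: "pt \<Rightarrow> pt option" where
  "T4inv_map = word_map [w0_map, r_map]"

definition ipow_map :: "(pt \<Rightarrow> pt option) \<Rightarrow> (pt \<Rightarrow> pt option) \<Rightarrow> int \<Rightarrow> pt \<Rightarrow> pt option" where
  "ipow_map f finv k =
     (if k \<ge> 0 then word_map (replicate (nat k) f) else word_map (replicate (nat (- k)) finv))"

definition tauKN :: "int \<Rightarrow> int \<Rightarrow> pt \<Rightarrow> complex option" where
  "tauKN k N x =
     map_option (\<lambda>y. T y 1)
       (Option.bind (ipow_map R1_map R1inv_map k x) (ipow_map T4_map T4inv_map N))"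

end

theory Submission
  imports Defs "HOL-Computational_Algebra.Polynomial"
begin

text \<open>
  On the locus of points whose coordinates are all positive reals (with a_2 = q^(1/2) and
  a_0 a_1 a_2 = q), every formula of the action is subtraction-free. There R_1, T_4 and their
  inverses act as mutually inverse, commuting bijections, and tau^k_N is the tau_1 of the point
  R_1^k T_4^N x. This shift fixes q and sends c to q^N c and a_0 to q^(k/2) a_0, which absorbs
  exactly the prefactors: the relations at (k, N) are those at (0, 0) for the shifted point,
  where they are identities between rational functions of its coordinates.

  A general point x is joined to the positive locus by applying the curve
  t \<mapsto> (Re z + C) + t Im z + C t^2 to each coordinate z: it passes through x at t = \<i>
  and is positive for real t in [-1, 1] once C is large. Along it each relation is a rational
  function of t vanishing on [-1, 1], hence also at t = \<i>.
\<close>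

(* Keep the indices 1 and 2 as numerals instead of Suc terms. *)
declare One_nat_def [simp del]

section \<open>Integer powers of an invertible map\<close>

definition zpow_fun :: "('a \<Rightarrow> 'a) \<Rightarrow> ('a \<Rightarrow> 'a) \<Rightarrow> int \<Rightarrow> 'a \<Rightarrow> 'a" where
  "zpow_fun f g k = (if 0 \<le> k then f ^^ nat k else g ^^ nat (- k))"

lemma zpow_fun_0 [simp]: "zpow_fun f g 0 = id"
  by (simp add: zpow_fun_def)

lemma zpow_fun_small:
  "zpow_fun f g 1 x = f x" "zpow_fun f g 2 x = f (f x)"
  "zpow_fun f g (-1) x = g x" "zpow_fun f g (-2) x = g (g x)"
  by (simp_all add: zpow_fun_def numeral_2_eq_2)

locale inverse_pair_on =
  fixes D :: "'a set" and f g :: "'a \<Rightarrow> 'a"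
  assumes f_in: "x \<in> D \<Longrightarrow> f x \<in> D" and g_in: "x \<in> D \<Longrightarrow> g x \<in> D"
    and f_g: "x \<in> D \<Longrightarrow> f (g x) = x" and g_f: "x \<in> D \<Longrightarrow> g (f x) = x"
begin

lemma zpow_fun_in: "x \<in> D \<Longrightarrow> zpow_fun f g k x \<in> D"
proof -
  have "(h ^^ n) x \<in> D" if "x \<in> D" "\<And>y. y \<in> D \<Longrightarrow> h y \<in> D" for h :: "'a \<Rightarrow> 'a" and n x
    using that by (induction n) auto
  then show "x \<in> D \<Longrightarrow> zpow_fun f g k x \<in> D"
    using f_in g_in by (simp add: zpow_fun_def)
qed

lemma zpow_fun_succ: "x \<in> D \<Longrightarrow> zpow_fun f g (k + 1) x = f (zpow_fun f g k x)"
proof (cases "0 \<le> k")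
  case True
  then show ?thesis by (simp add: zpow_fun_def nat_add_distrib)
next
  case False
  assume x: "x \<in> D"
  have prev: "zpow_fun f g (k + 1) x = (g ^^ nat (- k - 1)) x"
    using False by (auto simp: zpow_fun_def)
  have "nat (- k) = Suc (nat (- k - 1))" using False by simp
  then have "zpow_fun f g k x = g ((g ^^ nat (- k - 1)) x)"
    using False by (simp add: zpow_fun_def)
  then show ?thesis
    using f_g zpow_fun_in[OF x, of "k + 1"] by (simp add: prev)
qed

lemma zpow_fun_pred: "x \<in> D \<Longrightarrow> zpow_fun f g (k - 1) x = g (zpow_fun f g k x)"
  using zpow_fun_succ[of x "k - 1"] g_f zpow_fun_in by simp

lemma zpow_fun_add: "x \<in> D \<Longrightarrow> zpow_fun f g a (zpow_fun f g b x) = zpow_fun f g (a + b) x"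
proof (induction a rule: int_induct[where k = 0])
  case (step1 i)
  then show ?case
    using zpow_fun_succ[of _ i] zpow_fun_succ[of x "i + b"] zpow_fun_in by (simp add: algebra_simps)
next
  case (step2 i)
  then show ?case
    using zpow_fun_pred[of _ i] zpow_fun_pred[of x "i + b"] zpow_fun_in by (simp add: algebra_simps)
qed simp

lemma zpow_fun_commute:
  assumes h_in: "\<And>x. x \<in> D \<Longrightarrow> h x \<in> D" and h_f: "\<And>x. x \<in> D \<Longrightarrow> h (f x) = f (h x)"
    and "x \<in> D"
  shows "h (zpow_fun f g k x) = zpow_fun f g k (h x)"
proof -
  have h_g: "h (g y) = g (h y)" if "y \<in> D" for y
    by (metis g_f g_in h_f h_in that f_g)
  show ?thesis
  proof (induction k rule: int_induct[where k = 0])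
    case (step1 i)
    then show ?case
      using zpow_fun_succ zpow_fun_in h_f h_in \<open>x \<in> D\<close> by simp
  next
    case (step2 i)
    then show ?case
      using zpow_fun_pred zpow_fun_in h_g h_in \<open>x \<in> D\<close> by simp
  qed simp
qed

lemma zpow_fun_scale:
  fixes \<phi> \<psi> :: "'a \<Rightarrow> 'b::field"
  assumes \<phi>_f: "\<And>x. x \<in> D \<Longrightarrow> \<phi> (f x) = \<psi> x * \<phi> x"
    and \<psi>_f: "\<And>x. x \<in> D \<Longrightarrow> \<psi> (f x) = \<psi> x"
    and \<psi>_nz: "\<And>x. x \<in> D \<Longrightarrow> \<psi> x \<noteq> 0" and "x \<in> D"
  shows "\<phi> (zpow_fun f g k x) = \<psi> x powi k * \<phi> x"
proof -
  have \<psi>_g: "\<psi> (g y) = \<psi> y" if "y \<in> D" for y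
    using \<psi>_f[OF g_in[OF that]] f_g[OF that] by simp
  have \<phi>_g: "\<phi> (g y) = \<phi> y / \<psi> y" if "y \<in> D" for y
    using \<phi>_f[OF g_in[OF that]] f_g[OF that] \<psi>_g[OF that] \<psi>_nz[OF that]
    by (simp add: eq_divide_eq mult.commute)
  have \<psi>_zpow: "\<psi> (zpow_fun f g k x) = \<psi> x" for k
  proof (induction k rule: int_induct[where k = 0])
    case (step1 i)
    then show ?case using zpow_fun_succ zpow_fun_in \<psi>_f \<open>x \<in> D\<close> by simp
  next
    case (step2 i)
    then show ?case using zpow_fun_pred zpow_fun_in \<psi>_g \<open>x \<in> D\<close> by simp
  qed simp
  show ?thesis
  proof (induction k rule: int_induct[where k = 0])
    case (step1 i)
    then show ?case
      using zpow_fun_succ zpow_fun_in \<phi>_f \<psi>_zpow \<psi>_nz \<open>x \<in> D\<close> by (simp add: power_int_add)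
  next
    case (step2 i)
    then show ?case
      using zpow_fun_pred zpow_fun_in \<phi>_g \<psi>_zpow \<psi>_nz \<open>x \<in> D\<close> by (simp add: power_int_diff)
  qed simp
qed

end

lemma power_int_affine:
  fixes q :: "'a::field"
  assumes "q \<noteq> 0"
  shows "q powi (a * k + b * N + c) = (q powi k) powi a * (q powi N) powi b * q powi c"
  using assms by (simp add: power_int_add flip: power_int_mult) (simp add: mult.commute)

section \<open>Positive reals and rational functions\<close>

definition pos_real :: "complex \<Rightarrow> bool" where
  "pos_real z \<longleftrightarrow> (\<exists>r>0. z = complex_of_real r)"

lemma pos_real_add: "pos_real a \<Longrightarrow> pos_real b \<Longrightarrow> pos_real (a + b)"
  unfolding pos_real_def by (metis add_pos_pos of_real_add)

lemma pos_real_mult: "pos_real a \<Longrightarrow> pos_real b \<Longrightarrow> pos_real (a * b)"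
  unfolding pos_real_def by (metis mult_pos_pos of_real_mult)

lemma pos_real_divide: "pos_real a \<Longrightarrow> pos_real b \<Longrightarrow> pos_real (a / b)"
  unfolding pos_real_def by (metis divide_pos_pos of_real_divide)

lemma pos_real_power: "pos_real a \<Longrightarrow> pos_real (a ^ n)"
  unfolding pos_real_def by (metis zero_less_power of_real_power)

lemma pos_real_1: "pos_real 1"
  unfolding pos_real_def by (rule exI[of _ 1]) simp

lemma pos_real_numeral: "pos_real (numeral n)"
  unfolding pos_real_def by (rule exI[of _ "numeral n"]) simp

lemma pos_real_nonzero: "pos_real a \<Longrightarrow> a \<noteq> 0"
  unfolding pos_real_def by auto

lemmas pos_real_intros =
  pos_real_add pos_real_mult pos_real_divide pos_real_power pos_real_1 pos_real_numeral

definition rational_on :: "complex set \<Rightarrow> (complex \<Rightarrow> complex) \<Rightarrow> bool" where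
  "rational_on S f \<longleftrightarrow> (\<exists>p q. \<forall>t\<in>S. poly q t \<noteq> 0 \<and> f t = poly p t / poly q t)"

lemma rational_on_const: "rational_on S (\<lambda>t. c)"
  unfolding rational_on_def by (rule exI[of _ "[:c:]"], rule exI[of _ 1]) simp

lemma rational_on_id: "rational_on S (\<lambda>t. t)"
  unfolding rational_on_def by (rule exI[of _ "[:0, 1:]"], rule exI[of _ 1]) simp

lemma rational_on_add: "rational_on S f \<Longrightarrow> rational_on S g \<Longrightarrow> rational_on S (\<lambda>t. f t + g t)"
  unfolding rational_on_def
proof (elim exE)
  fix p1 q1 p2 q2
  assume "\<forall>t\<in>S. poly q1 t \<noteq> 0 \<and> f t = poly p1 t / poly q1 t"
    and "\<forall>t\<in>S. poly q2 t \<noteq> 0 \<and> g t = poly p2 t / poly q2 t"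
  then show "\<exists>p q. \<forall>t\<in>S. poly q t \<noteq> 0 \<and> f t + g t = poly p t / poly q t"
    by (intro exI[of _ "p1 * q2 + p2 * q1"] exI[of _ "q1 * q2"]) (simp add: field_simps)
qed

lemma rational_on_diff: "rational_on S f \<Longrightarrow> rational_on S g \<Longrightarrow> rational_on S (\<lambda>t. f t - g t)"
  unfolding rational_on_def
proof (elim exE)
  fix p1 q1 p2 q2
  assume "\<forall>t\<in>S. poly q1 t \<noteq> 0 \<and> f t = poly p1 t / poly q1 t"
    and "\<forall>t\<in>S. poly q2 t \<noteq> 0 \<and> g t = poly p2 t / poly q2 t"
  then show "\<exists>p q. \<forall>t\<in>S. poly q t \<noteq> 0 \<and> f t - g t = poly p t / poly q t"
    by (intro exI[of _ "p1 * q2 - p2 * q1"] exI[of _ "q1 * q2"]) (simp add: field_simps)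
qed

lemma rational_on_mult: "rational_on S f \<Longrightarrow> rational_on S g \<Longrightarrow> rational_on S (\<lambda>t. f t * g t)"
  unfolding rational_on_def
proof (elim exE)
  fix p1 q1 p2 q2
  assume "\<forall>t\<in>S. poly q1 t \<noteq> 0 \<and> f t = poly p1 t / poly q1 t"
    and "\<forall>t\<in>S. poly q2 t \<noteq> 0 \<and> g t = poly p2 t / poly q2 t"
  then show "\<exists>p q. \<forall>t\<in>S. poly q t \<noteq> 0 \<and> f t * g t = poly p t / poly q t"
    by (intro exI[of _ "p1 * p2"] exI[of _ "q1 * q2"]) simp
qed

lemma rational_on_divide:
  assumes "rational_on S f" "rational_on S g" "\<And>t. t \<in> S \<Longrightarrow> g t \<noteq> 0"
  shows "rational_on S (\<lambda>t. f t / g t)"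
  using assms(1,2) unfolding rational_on_def
proof (elim exE)
  fix p1 q1 p2 q2
  assume 1: "\<forall>t\<in>S. poly q1 t \<noteq> 0 \<and> f t = poly p1 t / poly q1 t"
    and 2: "\<forall>t\<in>S. poly q2 t \<noteq> 0 \<and> g t = poly p2 t / poly q2 t"
  then have "\<forall>t\<in>S. poly p2 t \<noteq> 0" using assms(3) by fastforce
  with 1 2 show "\<exists>p q. \<forall>t\<in>S. poly q t \<noteq> 0 \<and> f t / g t = poly p t / poly q t"
    by (intro exI[of _ "p1 * q2"] exI[of _ "q1 * p2"]) simp
qed

lemma rational_on_power: "rational_on S f \<Longrightarrow> rational_on S (\<lambda>t. f t ^ n)"
  by (induction n) (simp_all add: rational_on_const rational_on_mult)

lemma rational_on_powi:
  assumes "rational_on S f" "\<And>t. t \<in> S \<Longrightarrow> f t \<noteq> 0"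
  shows "rational_on S (\<lambda>t. f t powi n)"
proof (cases "0 \<le> n")
  case True
  then show ?thesis using rational_on_power[OF assms(1)] by (simp add: power_int_def)
next
  case False
  then show ?thesis
    using rational_on_divide[OF rational_on_const rational_on_power[OF assms(1)]] assms(2)
    by (simp add: power_int_def field_simps)
qed

lemma rational_on_if: "rational_on S f \<Longrightarrow> rational_on S g \<Longrightarrow> rational_on S (\<lambda>t. if c then f t else g t)"
  by (cases c) simp_all

lemma rational_on_subset: "rational_on S f \<Longrightarrow> S' \<subseteq> S \<Longrightarrow> rational_on S' f"
  unfolding rational_on_def by blast

lemma rational_on_cong: "rational_on S f \<Longrightarrow> (\<And>t. t \<in> S \<Longrightarrow> f t = g t) \<Longrightarrow> rational_on S g"
  unfolding rational_on_def by auto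

lemma rational_on_eq_0:
  assumes "rational_on S f" "infinite Z" "Z \<subseteq> S" "\<And>t. t \<in> Z \<Longrightarrow> f t = 0" "t \<in> S"
  shows "f t = 0"
proof -
  obtain p q where pq: "\<forall>t\<in>S. poly q t \<noteq> 0 \<and> f t = poly p t / poly q t"
    using assms(1) unfolding rational_on_def by blast
  have "Z \<subseteq> {t. poly p t = 0}" using pq assms(3,4) by fastforce
  then have "p = 0" using assms(2) finite_subset poly_roots_finite by blast
  then show ?thesis using pq assms(5) by simp
qed

lemmas rational_on_intros = rational_on_const rational_on_add rational_on_mult rational_on_power
  rational_on_divide rational_on_if

definition positive_curve :: "real \<Rightarrow> complex \<Rightarrow> complex \<Rightarrow> complex" where
  "positive_curve C z t = of_real (Re z + C) + t * of_real (Im z) + of_real C * t ^ 2"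

lemma positive_curve_ii: "positive_curve C z \<i> = z"
  by (simp add: positive_curve_def complex_eq_iff)

lemma pos_real_positive_curve:
  assumes "\<bar>Re z\<bar> + \<bar>Im z\<bar> < C" "s \<in> {-1..1}"
  shows "pos_real (positive_curve C z (of_real s))"
proof -
  have "\<bar>s\<bar> \<le> 1" using assms(2) by auto
  then have "\<bar>s * Im z\<bar> \<le> \<bar>Im z\<bar>"
    using mult_right_mono[of "\<bar>s\<bar>" 1 "\<bar>Im z\<bar>"] by (simp add: abs_mult)
  then have "0 < Re z + C + s * Im z + C * s ^ 2"
    using assms(1) by (smt (verit) zero_le_power2 mult_nonneg_nonneg)
  then show ?thesis
    unfolding pos_real_def positive_curve_def
    by (intro exI[of _ "Re z + C + s * Im z + C * s ^ 2"]) simp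
qed

lemma rational_on_positive_curve: "rational_on S (positive_curve C z)"
  unfolding positive_curve_def
  by (intro rational_on_add rational_on_mult rational_on_power rational_on_const rational_on_id)

lemma all_less_3: "(\<forall>i<3. P (i::nat)) \<longleftrightarrow> P 0 \<and> P 1 \<and> P 2"
  by (auto simp: numeral_3_eq_3 numeral_2_eq_2 less_Suc_eq One_nat_def)

lemma mod_3_cases: "(n::nat) mod 3 = 0 \<or> n mod 3 = 1 \<or> n mod 3 = 2"
  by linarith

section \<open>The generators as total maps\<close>

definition s_pt :: "nat \<Rightarrow> pt \<Rightarrow> pt" where
  "s_pt i x = \<lparr> qr = qr x,
     ar = (\<lambda>j. if j mod 3 = i mod 3 then 1 / A x i else A x j * A x i),
     cr = cr x,
     tau = (\<lambda>j. if j mod 3 = i mod 3 then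
              (uu x i * T x (i+1) * TB x (i+2) + TB x (i+1) * T x (i+2)) / (uh x i * TB x i)
            else T x j),
     taub = (\<lambda>j. if j mod 3 = i mod 3 then
              (vv x i * TB x (i+1) * T x (i+2) + T x (i+1) * TB x (i+2)) / (vh x i * T x i)
            else TB x j) \<rparr>"

definition pi_pt :: "pt \<Rightarrow> pt" where
  "pi_pt x = \<lparr> qr = qr x, ar = (\<lambda>j. A x (j+1)), cr = cr x,
     tau = (\<lambda>j. T x (j+1)), taub = (\<lambda>j. TB x (j+1)) \<rparr>"

definition w0_pt :: "pt \<Rightarrow> pt" where
  "w0_pt x = \<lparr> qr = qr x, ar = ar x, cr = 1 / cr x, tau = tau x,
     taub = (\<lambda>i. A x (i+1) ^ 2 *
              (TB x i * T x (i+1) * T x (i+2)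
               + uu x (i+2) * T x i * TB x (i+1) * T x (i+2)
               + T x i * T x (i+1) * TB x (i+2) / uu x (i+1))
              / (A x (i+2) ^ 2 * TB x (i+1) * TB x (i+2))) \<rparr>"

definition r_pt :: "pt \<Rightarrow> pt" where
  "r_pt x = \<lparr> qr = qr x, ar = ar x, cr = 1 / (qr x ^ 2 * cr x), tau = taub x, taub = tau x \<rparr>"

lemma s_map_eq:
  "s_map i x = (if qr x \<noteq> 0 \<and> cr x \<noteq> 0 \<and> A x i \<noteq> 0 \<and> T x i \<noteq> 0 \<and> TB x i \<noteq> 0
                then Some (s_pt i x) else None)"
  by (simp add: s_map_def s_pt_def)

lemma pi_map_eq: "pi_map x = Some (pi_pt x)"
  by (simp add: pi_map_def pi_pt_def)

lemma w0_map_eq: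
  "w0_map x = (if qr x \<noteq> 0 \<and> cr x \<noteq> 0 \<and> (\<forall>i<3. A x i \<noteq> 0 \<and> TB x i \<noteq> 0)
               then Some (w0_pt x) else None)"
  by (simp add: w0_map_def w0_pt_def)

lemma r_map_eq: "r_map x = (if qr x \<noteq> 0 \<and> cr x \<noteq> 0 then Some (r_pt x) else None)"
  by (simp add: r_map_def r_pt_def)

text \<open>
  Only indices modulo 3 are meaningful. Normalising makes the index functions 3-periodic, so
  that points can be compared by record equality.
\<close>

definition normal_pt :: "pt \<Rightarrow> pt" where
  "normal_pt x = x\<lparr>ar := A x, tau := T x, taub := TB x\<rparr>"

lemma normal_pt_simps [simp]:
  "qr (normal_pt x) = qr x" "cr (normal_pt x) = cr x" "ar (normal_pt x) 0 = ar x 0"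
  "A (normal_pt x) i = A x i" "T (normal_pt x) i = T x i" "TB (normal_pt x) i = TB x i"
  by (simp_all add: normal_pt_def A_def T_def TB_def)

lemma normal_pt_weights [simp]:
  "uu (normal_pt x) i = uu x i" "uh (normal_pt x) i = uh x i"
  "vv (normal_pt x) i = vv x i" "vh (normal_pt x) i = vh x i"
  by (simp_all add: uu_def uh_def vv_def vh_def)

lemma s_pt_normal_pt: "s_pt i (normal_pt x) = s_pt i x"
  unfolding s_pt_def normal_pt_simps normal_pt_weights by simp

lemma normal_pt_s_pt: "normal_pt (s_pt i x) = s_pt i x"
  by (simp add: s_pt_def normal_pt_def A_def T_def TB_def fun_eq_iff)

lemma pi_pt_normal_pt: "pi_pt (normal_pt x) = pi_pt x"
  by (simp add: pi_pt_def)

lemma normal_pt_pi_pt: "normal_pt (pi_pt x) = pi_pt x"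
  by (simp add: pi_pt_def normal_pt_def A_def T_def TB_def fun_eq_iff mod_add_left_eq)

lemma w0_pt_normal_pt: "w0_pt (normal_pt x) = normal_pt (w0_pt x)"
  by (simp add: w0_pt_def normal_pt_def A_def T_def TB_def uu_def fun_eq_iff
      mod_Suc_eq mod_Suc_Suc_eq mod_add_left_eq)

lemma r_pt_normal_pt: "r_pt (normal_pt x) = normal_pt (r_pt x)"
  by (simp add: r_pt_def normal_pt_def A_def T_def TB_def fun_eq_iff)

lemma generator_normal_pt:
  "s_map i (normal_pt x) = map_option normal_pt (s_map i x)"
  "pi_map (normal_pt x) = map_option normal_pt (pi_map x)"
  "w0_map (normal_pt x) = map_option normal_pt (w0_map x)"
  "r_map (normal_pt x) = map_option normal_pt (r_map x)"
  by (simp_all add: s_map_eq pi_map_eq w0_map_eq r_map_eq s_pt_normal_pt normal_pt_s_pt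
      pi_pt_normal_pt normal_pt_pi_pt w0_pt_normal_pt r_pt_normal_pt)

lemma normal_pt_eqI:
  assumes "normal_pt x = x" "normal_pt y = y" "qr x = qr y" "cr x = cr y"
    and "\<forall>i<3. ar x i = ar y i \<and> tau x i = tau y i \<and> taub x i = taub y i"
  shows "x = y"
proof -
  have "normal_pt x = normal_pt y"
    using assms(3-5) by (simp add: normal_pt_def A_def T_def TB_def fun_eq_iff)
  then show ?thesis using assms(1,2) by simp
qed

definition R1_pt :: "pt \<Rightarrow> pt" where "R1_pt x = s_pt 1 (pi_pt (pi_pt x))"

definition R1inv_pt :: "pt \<Rightarrow> pt" where "R1inv_pt x = pi_pt (s_pt 1 x)"

definition T4_pt :: "pt \<Rightarrow> pt" where "T4_pt x = w0_pt (r_pt x)"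

definition T4inv_pt :: "pt \<Rightarrow> pt" where "T4inv_pt x = r_pt (w0_pt x)"

lemma index_numeral_simps [simp]:
  "ar x (Suc (Suc 0)) = ar x 2" "tau x (Suc (Suc 0)) = tau x 2" "taub x (Suc (Suc 0)) = taub x 2"
  "ar x (Suc 0) = ar x 1" "tau x (Suc 0) = tau x 1" "taub x (Suc 0) = taub x 1"
  by (simp_all add: numeral_2_eq_2 One_nat_def)

lemma R1_pt_simps:
  "qr (R1_pt x) = qr x" "cr (R1_pt x) = cr x"
  "ar (R1_pt x) 0 = ar x 2 * ar x 0" "ar (R1_pt x) 1 = 1 / ar x 0" "ar (R1_pt x) 2 = ar x 1 * ar x 0"
  "tau (R1_pt x) 0 = tau x 2" "tau (R1_pt x) 2 = tau x 1"
  "tau (R1_pt x) 1 = (ar x 0 ^ 6 / (qr x ^ 4 * cr x ^ 4) * tau x 1 * taub x 2 + taub x 1 * tau x 2)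
        / (ar x 0 ^ 3 / (qr x ^ 2 * cr x ^ 2) * taub x 0)"
  "taub (R1_pt x) 0 = taub x 2" "taub (R1_pt x) 2 = taub x 1"
  "taub (R1_pt x) 1 = (qr x ^ 4 * cr x ^ 4 * ar x 0 ^ 6 * taub x 1 * tau x 2 + tau x 1 * taub x 2)
        / (qr x ^ 2 * cr x ^ 2 * ar x 0 ^ 3 * tau x 0)"
  by (simp_all add: R1_pt_def s_pt_def pi_pt_def A_def T_def TB_def uu_def uh_def vv_def vh_def)

lemma R1inv_pt_simps:
  "qr (R1inv_pt x) = qr x" "cr (R1inv_pt x) = cr x"
  "ar (R1inv_pt x) 0 = 1 / ar x 1" "ar (R1inv_pt x) 1 = ar x 2 * ar x 1"
  "ar (R1inv_pt x) 2 = ar x 0 * ar x 1"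
  "tau (R1inv_pt x) 1 = tau x 2" "tau (R1inv_pt x) 2 = tau x 0"
  "tau (R1inv_pt x) 0 = (ar x 1 ^ 6 / (qr x ^ 4 * cr x ^ 4) * tau x 2 * taub x 0 + taub x 2 * tau x 0)
        / (ar x 1 ^ 3 / (qr x ^ 2 * cr x ^ 2) * taub x 1)"
  "taub (R1inv_pt x) 1 = taub x 2" "taub (R1inv_pt x) 2 = taub x 0"
  "taub (R1inv_pt x) 0 = (qr x ^ 4 * cr x ^ 4 * ar x 1 ^ 6 * taub x 2 * tau x 0 + tau x 2 * taub x 0)
        / (qr x ^ 2 * cr x ^ 2 * ar x 1 ^ 3 * tau x 1)"
  by (simp_all add: R1inv_pt_def s_pt_def pi_pt_def A_def T_def TB_def uu_def uh_def vv_def vh_def)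

lemma T4_pt_simps:
  "qr (T4_pt x) = qr x" "cr (T4_pt x) = qr x ^ 2 * cr x" "ar (T4_pt x) = ar x" "tau (T4_pt x) = taub x"
  by (simp_all add: T4_pt_def w0_pt_def r_pt_def)

lemma uu_r_pt: "qr x \<noteq> 0 \<Longrightarrow> cr x \<noteq> 0 \<Longrightarrow> uu (r_pt x) j = qr x ^ 4 * cr x ^ 4 * A x j ^ 6"
  by (simp add: uu_def r_pt_def A_def field_simps)

lemma T4_pt_taub:
  assumes "qr x \<noteq> 0" "cr x \<noteq> 0"
  shows "taub (T4_pt x) 0 = ar x 1 ^ 2 * (tau x 0 * taub x 1 * taub x 2
       + qr x ^ 4 * cr x ^ 4 * ar x 2 ^ 6 * taub x 0 * tau x 1 * taub x 2
       + taub x 0 * taub x 1 * tau x 2 / (qr x ^ 4 * cr x ^ 4 * ar x 1 ^ 6))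
       / (ar x 2 ^ 2 * tau x 1 * tau x 2)"
   "taub (T4_pt x) 1 = ar x 2 ^ 2 * (tau x 1 * taub x 2 * taub x 0
       + qr x ^ 4 * cr x ^ 4 * ar x 0 ^ 6 * taub x 1 * tau x 2 * taub x 0
       + taub x 1 * taub x 2 * tau x 0 / (qr x ^ 4 * cr x ^ 4 * ar x 2 ^ 6))
       / (ar x 0 ^ 2 * tau x 2 * tau x 0)"
   "taub (T4_pt x) 2 = ar x 0 ^ 2 * (tau x 2 * taub x 0 * taub x 1
       + qr x ^ 4 * cr x ^ 4 * ar x 1 ^ 6 * taub x 2 * tau x 0 * taub x 1
       + taub x 2 * taub x 0 * tau x 1 / (qr x ^ 4 * cr x ^ 4 * ar x 0 ^ 6))
       / (ar x 1 ^ 2 * tau x 0 * tau x 1)"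
  using assms unfolding T4_pt_def w0_pt_def
  by (simp_all add: uu_r_pt del: times_divide_eq_right divide_divide_eq_right)
     (simp_all add: r_pt_def A_def T_def TB_def)

lemma T4inv_pt_simps:
  "qr (T4inv_pt x) = qr x" "cr (T4inv_pt x) = cr x / qr x ^ 2" "ar (T4inv_pt x) = ar x"
  "tau (T4inv_pt x) = taub (w0_pt x)" "taub (T4inv_pt x) = tau x"
  by (simp_all add: T4inv_pt_def w0_pt_def r_pt_def)

lemma w0_pt_simps:
  "qr (w0_pt x) = qr x" "cr (w0_pt x) = 1 / cr x" "ar (w0_pt x) = ar x" "tau (w0_pt x) = tau x"
  by (simp_all add: w0_pt_def)

lemma w0_pt_taub:
  "taub (w0_pt x) 0 = ar x 1 ^ 2 * (taub x 0 * tau x 1 * tau x 2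
       + ar x 2 ^ 6 / (qr x ^ 4 * cr x ^ 4) * tau x 0 * taub x 1 * tau x 2
       + tau x 0 * tau x 1 * taub x 2 / (ar x 1 ^ 6 / (qr x ^ 4 * cr x ^ 4)))
       / (ar x 2 ^ 2 * taub x 1 * taub x 2)"
  "taub (w0_pt x) 1 = ar x 2 ^ 2 * (taub x 1 * tau x 2 * tau x 0
       + ar x 0 ^ 6 / (qr x ^ 4 * cr x ^ 4) * tau x 1 * taub x 2 * tau x 0
       + tau x 1 * tau x 2 * taub x 0 / (ar x 2 ^ 6 / (qr x ^ 4 * cr x ^ 4)))
       / (ar x 0 ^ 2 * taub x 2 * taub x 0)"
  "taub (w0_pt x) 2 = ar x 0 ^ 2 * (taub x 2 * tau x 0 * tau x 1
       + ar x 1 ^ 6 / (qr x ^ 4 * cr x ^ 4) * tau x 2 * taub x 0 * tau x 1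
       + tau x 2 * tau x 0 * taub x 1 / (ar x 0 ^ 6 / (qr x ^ 4 * cr x ^ 4)))
       / (ar x 1 ^ 2 * taub x 0 * taub x 1)"
  by (simp_all add: w0_pt_def A_def T_def TB_def uu_def)

lemma normal_pt_R1_pt: "normal_pt (R1_pt x) = R1_pt x"
  by (simp add: R1_pt_def normal_pt_s_pt)

lemma normal_pt_R1inv_pt: "normal_pt (R1inv_pt x) = R1inv_pt x"
  by (simp add: R1inv_pt_def normal_pt_pi_pt)

lemma normal_pt_T4_pt: "normal_pt x = x \<Longrightarrow> normal_pt (T4_pt x) = T4_pt x"
  by (metis T4_pt_def r_pt_normal_pt w0_pt_normal_pt)

lemma normal_pt_T4inv_pt: "normal_pt x = x \<Longrightarrow> normal_pt (T4inv_pt x) = T4inv_pt x"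
  by (metis T4inv_pt_def r_pt_normal_pt w0_pt_normal_pt)

section \<open>The positive locus\<close>

definition positive_PII :: "pt \<Rightarrow> bool" where
  "positive_PII x \<longleftrightarrow> normal_pt x = x \<and> pos_real (qr x) \<and> pos_real (cr x)
     \<and> (\<forall>i<3. pos_real (ar x i) \<and> pos_real (tau x i) \<and> pos_real (taub x i))
     \<and> ar x 2 = qr x \<and> ar x 0 * ar x 1 = qr x"

lemmas positive_PII_iff = positive_PII_def[unfolded all_less_3]

lemma positive_PII_nonzero:
  assumes "positive_PII x"
  shows "qr x \<noteq> 0" "cr x \<noteq> 0" "ar x 0 \<noteq> 0" "ar x 1 \<noteq> 0" "ar x 2 \<noteq> 0"
    "tau x 0 \<noteq> 0" "tau x 1 \<noteq> 0" "tau x 2 \<noteq> 0" "taub x 0 \<noteq> 0" "taub x 1 \<noteq> 0" "taub x 2 \<noteq> 0"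
  using assms pos_real_nonzero unfolding positive_PII_iff by auto

lemma positive_PII_pos:
  assumes "positive_PII x"
  shows "pos_real (qr x)" "pos_real (cr x)" "pos_real (ar x 0)"
    "pos_real (tau x 0)" "pos_real (tau x 1)" "pos_real (tau x 2)"
    "pos_real (taub x 0)" "pos_real (taub x 1)" "pos_real (taub x 2)"
  using assms unfolding positive_PII_iff by auto

lemma positive_PII_ar:
  assumes "positive_PII x" shows "ar x 1 = qr x / ar x 0" "ar x 2 = qr x"
  using assms positive_PII_nonzero[OF assms] unfolding positive_PII_iff by (simp_all add: field_simps)

lemma positive_PII_R1_pt: "positive_PII x \<Longrightarrow> positive_PII (R1_pt x)"
  using positive_PII_nonzero[of x]
  by (simp add: positive_PII_iff R1_pt_simps pos_real_intros mult.commute)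
     (simp add: R1_pt_def normal_pt_s_pt)

lemma positive_PII_R1inv_pt: "positive_PII x \<Longrightarrow> positive_PII (R1inv_pt x)"
  using positive_PII_nonzero[of x]
  by (simp add: positive_PII_iff R1inv_pt_simps pos_real_intros mult.commute)
     (simp add: R1inv_pt_def normal_pt_pi_pt)

lemma positive_PII_T4_pt: "positive_PII x \<Longrightarrow> positive_PII (T4_pt x)"
  using positive_PII_nonzero[of x]
  by (simp add: positive_PII_iff T4_pt_simps T4_pt_taub pos_real_intros normal_pt_T4_pt)

lemma positive_PII_T4inv_pt: "positive_PII x \<Longrightarrow> positive_PII (T4inv_pt x)"
  using positive_PII_nonzero[of x]
  by (simp add: positive_PII_iff T4inv_pt_simps w0_pt_taub pos_real_intros normal_pt_T4inv_pt)

lemma positive_PII_r_pt: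
  assumes "positive_PII x" shows "positive_PII (r_pt x)"
proof -
  have "normal_pt (r_pt x) = r_pt x"
    using assms by (metis positive_PII_def r_pt_normal_pt)
  then show ?thesis
    using assms by (simp add: positive_PII_iff r_pt_def pos_real_intros)
qed

lemma R1_pt_R1inv_pt: "positive_PII x \<Longrightarrow> R1_pt (R1inv_pt x) = x"
  unfolding positive_PII_iff
  by (rule normal_pt_eqI)
     (simp_all add: normal_pt_R1_pt all_less_3 R1_pt_simps R1inv_pt_simps field_simps
        pos_real_nonzero pos_real_intros)

lemma R1inv_pt_R1_pt: "positive_PII x \<Longrightarrow> R1inv_pt (R1_pt x) = x"
  unfolding positive_PII_iff
  by (rule normal_pt_eqI)
     (simp_all add: normal_pt_R1inv_pt all_less_3 R1_pt_simps R1inv_pt_simps field_simps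
        pos_real_nonzero pos_real_intros)

lemma r_pt_involutive: "qr x \<noteq> 0 \<Longrightarrow> cr x \<noteq> 0 \<Longrightarrow> r_pt (r_pt x) = x"
  by (simp add: r_pt_def)

lemma w0_pt_involutive:
  assumes "positive_PII x" shows "w0_pt (w0_pt x) = x"
proof (rule normal_pt_eqI)
  note pos = positive_PII_pos[OF assms]
  have "taub (w0_pt (w0_pt x)) 0 = taub x 0" "taub (w0_pt (w0_pt x)) 1 = taub x 1"
    "taub (w0_pt (w0_pt x)) 2 = taub x 2"
    using pos unfolding w0_pt_taub w0_pt_simps positive_PII_ar[OF assms]
    by (simp add: field_simps pos_real_nonzero pos_real_intros; algebra)+
  then show "\<forall>i<3. ar (w0_pt (w0_pt x)) i = ar x i \<and> tau (w0_pt (w0_pt x)) i = tau x i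
      \<and> taub (w0_pt (w0_pt x)) i = taub x i"
    by (simp add: all_less_3 w0_pt_simps)
qed (use assms in \<open>simp_all add: w0_pt_simps positive_PII_iff flip: w0_pt_normal_pt\<close>)

lemma T4_pt_T4inv_pt: "positive_PII x \<Longrightarrow> T4_pt (T4inv_pt x) = x"
  using positive_PII_nonzero[of x]
  by (simp add: T4_pt_def T4inv_pt_def r_pt_involutive w0_pt_simps w0_pt_involutive)

lemma T4inv_pt_T4_pt: "positive_PII x \<Longrightarrow> T4inv_pt (T4_pt x) = x"
  using positive_PII_nonzero[of x]
  by (simp add: T4_pt_def T4inv_pt_def r_pt_involutive w0_pt_involutive positive_PII_r_pt)

lemma R1_pt_T4_pt:
  assumes "positive_PII x" shows "R1_pt (T4_pt x) = T4_pt (R1_pt x)"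
proof (rule normal_pt_eqI)
  note nz = positive_PII_nonzero[OF assms]
  have nz': "qr (R1_pt x) \<noteq> 0" "cr (R1_pt x) \<noteq> 0"
    using nz by (simp_all add: R1_pt_simps)
  note T4 = T4_pt_taub[OF nz(1,2)] T4_pt_taub[OF nz'] T4_pt_simps
  have "taub (R1_pt (T4_pt x)) 0 = taub (T4_pt (R1_pt x)) 0"
    "taub (R1_pt (T4_pt x)) 1 = taub (T4_pt (R1_pt x)) 1"
    "taub (R1_pt (T4_pt x)) 2 = taub (T4_pt (R1_pt x)) 2"
    "tau (R1_pt (T4_pt x)) 1 = tau (T4_pt (R1_pt x)) 1"
    unfolding T4 R1_pt_simps positive_PII_ar[OF assms] using positive_PII_pos[OF assms]
    by (simp add: field_simps pos_real_nonzero pos_real_intros; algebra)+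
  then show "\<forall>i<3. ar (R1_pt (T4_pt x)) i = ar (T4_pt (R1_pt x)) i
      \<and> tau (R1_pt (T4_pt x)) i = tau (T4_pt (R1_pt x)) i
      \<and> taub (R1_pt (T4_pt x)) i = taub (T4_pt (R1_pt x)) i"
    by (simp add: all_less_3 R1_pt_simps T4_pt_simps)
qed (use assms normal_pt_R1_pt positive_PII_R1_pt in
  \<open>simp_all add: R1_pt_simps T4_pt_simps normal_pt_T4_pt positive_PII_iff\<close>)

interpretation R1: inverse_pair_on "Collect positive_PII" R1_pt R1inv_pt
  by unfold_locales
    (simp_all add: positive_PII_R1_pt positive_PII_R1inv_pt R1_pt_R1inv_pt R1inv_pt_R1_pt)

interpretation T4: inverse_pair_on "Collect positive_PII" T4_pt T4inv_pt
  by unfold_locales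
    (simp_all add: positive_PII_T4_pt positive_PII_T4inv_pt T4_pt_T4inv_pt T4inv_pt_T4_pt)

definition shift_pt :: "pt \<Rightarrow> int \<Rightarrow> int \<Rightarrow> pt" where
  "shift_pt x k N = zpow_fun T4_pt T4inv_pt N (zpow_fun R1_pt R1inv_pt k x)"

lemma positive_PII_shift_pt: "positive_PII x \<Longrightarrow> positive_PII (shift_pt x k N)"
  using R1.zpow_fun_in T4.zpow_fun_in by (simp add: shift_pt_def)

lemma shift_pt_shift_pt:
  assumes "positive_PII x"
  shows "shift_pt (shift_pt x k N) a b = shift_pt x (k + a) (N + b)"
proof -
  let ?R = "zpow_fun R1_pt R1inv_pt" and ?T = "zpow_fun T4_pt T4inv_pt"
  have R1_T4: "R1_pt (?T n y) = ?T n (R1_pt y)" if "positive_PII y" for n y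
    using that by (intro T4.zpow_fun_commute) (simp_all add: positive_PII_R1_pt R1_pt_T4_pt)
  have "?R a (?T N y) = ?T N (?R a y)" if "positive_PII y" for y
    using that R1.zpow_fun_in T4.zpow_fun_in R1_T4
    by (intro R1.zpow_fun_commute[symmetric]) simp_all
  then show ?thesis
    using assms R1.zpow_fun_in by (simp add: shift_pt_def T4.zpow_fun_add R1.zpow_fun_add add.commute)
qed

lemma shift_pt_params:
  assumes "positive_PII x"
  shows "qr (shift_pt x k N) = qr x" "cr (shift_pt x k N) = qr x powi (2 * N) * cr x"
    "ar (shift_pt x k N) 0 = qr x powi k * ar x 0"
proof -
  let ?y = "zpow_fun R1_pt R1inv_pt k x"
  have y: "positive_PII ?y" using assms R1.zpow_fun_in by simp
  have qr_R1: "qr ?y = qr x" and cr_R1: "cr ?y = cr x"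
    using R1.zpow_fun_scale[of qr "\<lambda>_. 1"] R1.zpow_fun_scale[of cr "\<lambda>_. 1"] assms
    by (simp_all add: R1_pt_simps)
  have ar_R1: "ar ?y 0 = qr x powi k * ar x 0"
    using R1.zpow_fun_scale[of "\<lambda>y. ar y 0" qr] assms positive_PII_nonzero
    by (simp add: R1_pt_simps positive_PII_ar)
  have qr_T4: "qr (zpow_fun T4_pt T4inv_pt N ?y) = qr ?y"
    using T4.zpow_fun_scale[of qr "\<lambda>_. 1"] y by (simp add: T4_pt_simps)
  have ar_T4: "ar (zpow_fun T4_pt T4inv_pt N ?y) = ar ?y"
    using T4.zpow_fun_scale[of "\<lambda>y. ar y i" "\<lambda>_. 1" for i] y by (simp add: T4_pt_simps fun_eq_iff)
  have cr_T4: "cr (zpow_fun T4_pt T4inv_pt N ?y) = (qr ?y ^ 2) powi N * cr ?y"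
    using T4.zpow_fun_scale[of cr "\<lambda>y. qr y ^ 2"] y positive_PII_nonzero
    by (simp add: T4_pt_simps)
  show "qr (shift_pt x k N) = qr x" "cr (shift_pt x k N) = qr x powi (2 * N) * cr x"
    "ar (shift_pt x k N) 0 = qr x powi k * ar x 0"
    by (simp_all add: shift_pt_def qr_T4 qr_R1 ar_T4 ar_R1 cr_T4 cr_R1 power_int_mult)
qed

lemma word_map_append: "word_map (l1 @ l2) x = Option.bind (word_map l1 x) (word_map l2)"
  by (induction l1 arbitrary: x) (auto split: Option.bind_split)

lemma word_map_replicate:
  assumes "\<And>y. y \<in> D \<Longrightarrow> m y = Some (F y)" and "\<And>y. y \<in> D \<Longrightarrow> F y \<in> D" and "z \<in> D"
  shows "word_map (replicate n m) z = Some ((F ^^ n) z)"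
  using assms(3)
proof (induction n arbitrary: z)
  case (Suc n)
  then show ?case using assms(1,2) by (simp add: funpow_swap1)
qed simp

lemma ipow_map_eq_zpow_fun:
  assumes "\<And>y. y \<in> D \<Longrightarrow> m y = Some (F y)" "\<And>y. y \<in> D \<Longrightarrow> F y \<in> D"
    and "\<And>y. y \<in> D \<Longrightarrow> minv y = Some (Finv y)" "\<And>y. y \<in> D \<Longrightarrow> Finv y \<in> D" and "z \<in> D"
  shows "ipow_map m minv k z = Some (zpow_fun F Finv k z)"
  using word_map_replicate[of D m F, OF assms(1,2,5)] word_map_replicate[of D minv Finv, OF assms(3-5)]
  by (simp add: ipow_map_def zpow_fun_def)

lemma R1_map_positive: "positive_PII z \<Longrightarrow> R1_map z = Some (R1_pt z)"
  using positive_PII_nonzero[of z]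
  by (simp add: R1_map_def pi_map_eq s_map_eq R1_pt_def pi_pt_def A_def T_def TB_def)

lemma R1inv_map_positive: "positive_PII z \<Longrightarrow> R1inv_map z = Some (R1inv_pt z)"
  using positive_PII_nonzero[of z]
  by (simp add: R1inv_map_def pi_map_eq s_map_eq R1inv_pt_def A_def T_def TB_def)

lemma T4_map_positive: "positive_PII z \<Longrightarrow> T4_map z = Some (T4_pt z)"
  using positive_PII_nonzero[of z]
  by (simp add: T4_map_def r_map_eq w0_map_eq T4_pt_def r_pt_def A_def T_def TB_def all_less_3)

lemma T4inv_map_positive: "positive_PII z \<Longrightarrow> T4inv_map z = Some (T4inv_pt z)"
  using positive_PII_nonzero[of z]
  by (simp add: T4inv_map_def r_map_eq w0_map_eq T4inv_pt_def w0_pt_def A_def T_def TB_def all_less_3)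

lemma tauKN_positive: "positive_PII x \<Longrightarrow> tauKN j M x = Some (tau (shift_pt x j M) 1)"
proof -
  assume x: "positive_PII x"
  have "ipow_map R1_map R1inv_map j x = Some (zpow_fun R1_pt R1inv_pt j x)"
    using x R1_map_positive R1inv_map_positive positive_PII_R1_pt positive_PII_R1inv_pt
    by (intro ipow_map_eq_zpow_fun[where D = "Collect positive_PII"]) simp_all
  moreover have "ipow_map T4_map T4inv_map M y = Some (zpow_fun T4_pt T4inv_pt M y)"
    if "positive_PII y" for y
    using that T4_map_positive T4inv_map_positive positive_PII_T4_pt positive_PII_T4inv_pt
    by (intro ipow_map_eq_zpow_fun[where D = "Collect positive_PII"]) simp_all
  ultimately show ?thesis
    using x R1.zpow_fun_in by (simp add: tauKN_def shift_pt_def T_def)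
qed

definition tau_word :: "int \<Rightarrow> int \<Rightarrow> (pt \<Rightarrow> pt option) list" where
  "tau_word j M =
     (if 0 \<le> j then replicate (nat j) R1_map else replicate (nat (- j)) R1inv_map)
     @ (if 0 \<le> M then replicate (nat M) T4_map else replicate (nat (- M)) T4inv_map)"

lemma tauKN_tau_word: "tauKN j M x = map_option (\<lambda>y. T y 1) (word_map (tau_word j M) x)"
  by (simp add: tauKN_def tau_word_def ipow_map_def word_map_append)

lemma set_tau_word: "set (tau_word j M) \<subseteq> {R1_map, R1inv_map, T4_map, T4inv_map}"
  by (auto simp: tau_word_def)

lemma word_map_normal_pt:
  assumes "\<And>m x. m \<in> set ms \<Longrightarrow> m (normal_pt x) = map_option normal_pt (m x)"
  shows "word_map ms (normal_pt x) = map_option normal_pt (word_map ms x)"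
  using assms
proof (induction ms arbitrary: x)
  case (Cons m ms)
  then show ?case using Cons.prems[of m x] by (cases "m x") simp_all
qed simp

lemma tauKN_normal_pt: "tauKN j M (normal_pt x) = tauKN j M x"
proof -
  have "m (normal_pt x) = map_option normal_pt (m x)"
    if "m \<in> {R1_map, R1inv_map, T4_map, T4inv_map}" for m x
    using that unfolding R1_map_def R1inv_map_def T4_map_def T4inv_map_def
    by (auto intro!: word_map_normal_pt simp: generator_normal_pt)
  then have "word_map (tau_word j M) (normal_pt x) = map_option normal_pt (word_map (tau_word j M) x)"
    using set_tau_word by (intro word_map_normal_pt) blast
  then show ?thesis
    by (simp add: tauKN_tau_word option.map_comp comp_def)
qed

section \<open>The bilinear relations on the positive locus\<close>

definition bilinear1 :: "pt \<Rightarrow> int \<Rightarrow> int \<Rightarrow> complex" where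
  "bilinear1 x k N = (let \<tau> = (\<lambda>j M. the (tauKN j M x)); Q = qr x ^ 2; \<gamma> = cr x; \<alpha>\<^sub>0 = ar x 0 in
      qr x powi (-3*k+4*N+2) * \<gamma>^2 * \<alpha>\<^sub>0 powi (-3) * \<tau> (k+1) N * \<tau> (k-2) (N+1)
        - Q powi (-3*k+4*N+2) * \<gamma>^4 * \<alpha>\<^sub>0 powi (-6) * \<tau> (k-1) N * \<tau> k (N+1)
        - \<tau> (k-1) (N+1) * \<tau> k N)"

definition bilinear2 :: "pt \<Rightarrow> int \<Rightarrow> int \<Rightarrow> complex" where
  "bilinear2 x k N = (let \<tau> = (\<lambda>j M. the (tauKN j M x)); Q = qr x ^ 2; \<gamma> = cr x; \<alpha>\<^sub>0 = ar x 0 in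
      qr x powi (-3*k-4*N-2) * \<gamma> powi (-2) * \<alpha>\<^sub>0 powi (-3) * \<tau> (k+1) (N+1) * \<tau> (k-2) N
        - Q powi (-3*k-4*N-2) * \<gamma> powi (-4) * \<alpha>\<^sub>0 powi (-6) * \<tau> k N * \<tau> (k-1) (N+1)
        - \<tau> k (N+1) * \<tau> (k-1) N)"

definition bilinear3 :: "pt \<Rightarrow> int \<Rightarrow> int \<Rightarrow> complex" where
  "bilinear3 x k N = (let \<tau> = (\<lambda>j M. the (tauKN j M x)); Q = qr x ^ 2; \<gamma> = cr x; \<alpha>\<^sub>0 = ar x 0 in
      \<tau> k (N+1) * \<tau> (k+1) (N-1)
        - qr x powi (k-4*N+1) * \<gamma> powi (-2) * \<alpha>\<^sub>0 * \<tau> (k+2) N * \<tau> (k-1) N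
        - Q powi (-k+4*N-1) * \<gamma>^4 * \<alpha>\<^sub>0 powi (-2) * \<tau> k N * \<tau> (k+1) N)"

lemma bilinear_normal_pt:
  "bilinear1 (normal_pt x) k N = bilinear1 x k N" "bilinear2 (normal_pt x) k N = bilinear2 x k N"
  "bilinear3 (normal_pt x) k N = bilinear3 x k N"
  by (simp_all add: bilinear1_def bilinear2_def bilinear3_def tauKN_normal_pt)

lemma bilinear_positive_origin:
  assumes "positive_PII y"
  shows "bilinear1 y 0 0 = 0" "bilinear2 y 0 0 = 0" "bilinear3 y 0 0 = 0"
proof -
  note unfold = bilinear1_def bilinear2_def bilinear3_def Let_def tauKN_positive[OF assms] shift_pt_def
  note evaluate = zpow_fun_small T4_pt_simps T4inv_pt_simps R1inv_pt_simps w0_pt_taub[of "R1_pt y"]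
    R1_pt_simps
    positive_PII_ar[OF assms] power_int_minus
  show "bilinear1 y 0 0 = 0" "bilinear2 y 0 0 = 0"
    unfolding unfold using positive_PII_pos[OF assms]
    by (simp_all add: evaluate field_simps pos_real_nonzero pos_real_intros)
  show "bilinear3 y 0 0 = 0"
    unfolding unfold using positive_PII_pos[OF assms]
    by (simp add: evaluate field_simps pos_real_nonzero pos_real_intros; algebra)
qed

lemma bilinear_shift:
  assumes "positive_PII x"
  shows "bilinear1 x k N = bilinear1 (shift_pt x k N) 0 0"
    "bilinear2 x k N = bilinear2 (shift_pt x k N) 0 0"
    "bilinear3 x k N = bilinear3 (shift_pt x k N) 0 0"
proof -
  let ?y = "shift_pt x k N"
  have \<tau>: "the (tauKN j M ?y) = the (tauKN (k + j) (N + M) x)" for j M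
    using assms positive_PII_shift_pt
    by (simp add: tauKN_positive shift_pt_shift_pt)
  define q P R where "q = qr x" and "P = q powi k" and "R = q powi N"
  have q: "q \<noteq> 0" and \<gamma>: "cr x \<noteq> 0" and \<alpha>: "ar x 0 \<noteq> 0" and PR: "P \<noteq> 0" "R \<noteq> 0"
    using positive_PII_nonzero[OF assms] by (simp_all add: q_def P_def R_def)
  have lin: "q powi (a * k + b * N + c) = P powi a * R powi b * q powi c" for a b c
    using power_int_affine[OF q] by (simp add: P_def R_def)
  have params: "qr ?y = q" "cr ?y = R ^ 2 * cr x" "ar ?y 0 = P * ar x 0"
    using shift_pt_params[OF assms] lin[of 0 2 0] by (simp_all add: q_def P_def)
  have "-3*k-4*N-2 = -3*k + (-4)*N + (-2)" "k-4*N+1 = 1*k + (-4)*N + 1"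
    "-k+4*N-1 = (-1)*k + 4*N + (-1)"
    by simp_all
  moreover have "q powi (-3*k + 4*N + 2) = q^2 * R^4 / P^3"
    "q powi (-3*k + (-4)*N + (-2)) = 1 / (q^2 * R^4 * P^3)"
    "q powi (1*k + (-4)*N + 1) = q * P / R^4" "q powi ((-1)*k + 4*N + (-1)) = R^4 / (q * P)"
    unfolding lin using q PR by (simp_all add: power_int_minus field_simps)
  ultimately have exps: "q powi (-3*k+4*N+2) = q^2 * R^4 / P^3"
    "q powi (-3*k-4*N-2) = 1 / (q^2 * R^4 * P^3)"
    "q powi (k-4*N+1) = q * P / R^4" "q powi (-k+4*N-1) = R^4 / (q * P)"
    by simp_all
  have sq: "(q^2) powi m = (q powi m)^2" for m
    by (simp add: power_int_mult_distrib power2_eq_square)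
  show "bilinear1 x k N = bilinear1 ?y 0 0" "bilinear2 x k N = bilinear2 ?y 0 0"
    "bilinear3 x k N = bilinear3 ?y 0 0"
    unfolding bilinear1_def bilinear2_def bilinear3_def Let_def \<tau> params q_def[symmetric] sq exps
    using q \<gamma> \<alpha> PR by (simp_all add: power_int_minus field_simps)
qed

lemma bilinear_positive:
  assumes "positive_PII x"
  shows "bilinear1 x k N = 0" "bilinear2 x k N = 0" "bilinear3 x k N = 0"
  using bilinear_shift[OF assms] bilinear_positive_origin[OF positive_PII_shift_pt[OF assms]]
  by simp_all

section \<open>Continuation along rational families of points\<close>

definition rational_pt_on :: "complex set \<Rightarrow> (complex \<Rightarrow> pt) \<Rightarrow> bool" where
  "rational_pt_on S X \<longleftrightarrow> rational_on S (\<lambda>t. qr (X t)) \<and> rational_on S (\<lambda>t. cr (X t)) \<and>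
     (\<forall>i. rational_on S (\<lambda>t. A (X t) i) \<and> rational_on S (\<lambda>t. T (X t) i)
        \<and> rational_on S (\<lambda>t. TB (X t) i))"

definition preserves_rational_pts :: "(pt \<Rightarrow> pt option) \<Rightarrow> bool" where
  "preserves_rational_pts m \<longleftrightarrow>
     (\<forall>S X. rational_pt_on S X \<longrightarrow> rational_pt_on {t\<in>S. m (X t) \<noteq> None} (\<lambda>t. the (m (X t))))"

lemma rational_pt_onD:
  assumes "rational_pt_on S X"
  shows "rational_on S (\<lambda>t. qr (X t))" "rational_on S (\<lambda>t. cr (X t))" "rational_on S (\<lambda>t. A (X t) i)"
    "rational_on S (\<lambda>t. T (X t) i)" "rational_on S (\<lambda>t. TB (X t) i)"
  using assms unfolding rational_pt_on_def by auto

lemma rational_pt_on_subset: "rational_pt_on S X \<Longrightarrow> S' \<subseteq> S \<Longrightarrow> rational_pt_on S' X"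
  unfolding rational_pt_on_def using rational_on_subset by blast

lemma rational_pt_on_cong: "rational_pt_on S X \<Longrightarrow> (\<And>t. t \<in> S \<Longrightarrow> X t = Y t) \<Longrightarrow> rational_pt_on S Y"
  unfolding rational_pt_on_def by (metis (no_types, lifting) rational_on_cong)

lemma preserves_rational_ptsI:
  assumes "\<And>x. m x = (if P x then Some (F x) else None)"
    and "\<And>S X. rational_pt_on S X \<Longrightarrow> (\<And>t. t \<in> S \<Longrightarrow> P (X t)) \<Longrightarrow> rational_pt_on S (\<lambda>t. F (X t))"
  shows "preserves_rational_pts m"
  unfolding preserves_rational_pts_def
proof (intro allI impI)
  fix S X assume "rational_pt_on S X"
  then have "rational_pt_on {t\<in>S. P (X t)} (\<lambda>t. F (X t))"
    by (intro assms(2)) (auto elim: rational_pt_on_subset)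
  moreover have "{t\<in>S. m (X t) \<noteq> None} = {t\<in>S. P (X t)}"
    by (auto simp: assms(1))
  ultimately show "rational_pt_on {t\<in>S. m (X t) \<noteq> None} (\<lambda>t. the (m (X t)))"
    by (auto simp: assms(1) elim!: rational_pt_on_cong)
qed

lemma preserves_rational_pts_word_map:
  "(\<And>m. m \<in> set ms \<Longrightarrow> preserves_rational_pts m) \<Longrightarrow> preserves_rational_pts (word_map ms)"
proof (induction ms)
  case Nil
  then show ?case unfolding preserves_rational_pts_def by simp
next
  case (Cons m ms)
  show ?case unfolding preserves_rational_pts_def
  proof (intro allI impI)
    fix S X assume "rational_pt_on S X"
    then have "rational_pt_on {t\<in>S. m (X t) \<noteq> None} (\<lambda>t. the (m (X t)))"
      using Cons.prems unfolding preserves_rational_pts_def by simp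
    moreover have "preserves_rational_pts (word_map ms)"
      using Cons by simp
    ultimately have "rational_pt_on {t\<in>{t\<in>S. m (X t) \<noteq> None}. word_map ms (the (m (X t))) \<noteq> None}
        (\<lambda>t. the (word_map ms (the (m (X t)))))"
      unfolding preserves_rational_pts_def by blast
    moreover have "{t\<in>S. word_map (m # ms) (X t) \<noteq> None}
        = {t\<in>{t\<in>S. m (X t) \<noteq> None}. word_map ms (the (m (X t))) \<noteq> None}"
      by (auto split: Option.bind_split)
    ultimately show "rational_pt_on {t\<in>S. word_map (m # ms) (X t) \<noteq> None}
        (\<lambda>t. the (word_map (m # ms) (X t)))"
      by (auto elim!: rational_pt_on_cong split: Option.bind_split)
  qed
qed

lemma rational_on_weights:
  assumes "rational_pt_on S X" "\<And>t. t \<in> S \<Longrightarrow> qr (X t) \<noteq> 0 \<and> cr (X t) \<noteq> 0"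
  shows "rational_on S (\<lambda>t. uu (X t) i)" "rational_on S (\<lambda>t. uh (X t) i)"
    "rational_on S (\<lambda>t. vv (X t) i)" "rational_on S (\<lambda>t. vh (X t) i)"
  unfolding uu_def uh_def vv_def vh_def using rational_pt_onD[OF assms(1)] assms(2)
  by (auto intro!: rational_on_divide rational_on_mult rational_on_power)

lemma preserves_rational_pts_pi_map: "preserves_rational_pts pi_map"
proof (rule preserves_rational_ptsI[where P = "\<lambda>_. True"])
  fix S X assume "rational_pt_on S X"
  moreover have "A (pi_pt w) j = A w (j+1)" "T (pi_pt w) j = T w (j+1)"
    "TB (pi_pt w) j = TB w (j+1)" for w j
    by (simp_all add: A_def T_def TB_def pi_pt_def mod_add_left_eq)
  ultimately show "rational_pt_on S (\<lambda>t. pi_pt (X t))"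
    unfolding rational_pt_on_def by (simp add: pi_pt_def)
qed (simp add: pi_map_eq)

lemma preserves_rational_pts_r_map: "preserves_rational_pts r_map"
proof (rule preserves_rational_ptsI[OF r_map_eq])
  fix S X assume "rational_pt_on S X" "\<And>t. t \<in> S \<Longrightarrow> qr (X t) \<noteq> 0 \<and> cr (X t) \<noteq> 0"
  moreover have "A (r_pt w) j = A w j" "T (r_pt w) j = TB w j" "TB (r_pt w) j = T w j" for w j
    by (simp_all add: A_def T_def TB_def r_pt_def)
  ultimately show "rational_pt_on S (\<lambda>t. r_pt (X t))"
    unfolding rational_pt_on_def by (auto simp: r_pt_def intro!: rational_on_intros)
qed

lemma preserves_rational_pts_s_map: "preserves_rational_pts (s_map i)"
proof (rule preserves_rational_ptsI[OF s_map_eq])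
  fix S X
  assume X: "rational_pt_on S X"
    and nz: "\<And>t. t \<in> S \<Longrightarrow> qr (X t) \<noteq> 0 \<and> cr (X t) \<noteq> 0 \<and> A (X t) i \<noteq> 0 \<and> T (X t) i \<noteq> 0 \<and> TB (X t) i \<noteq> 0"
  note R = rational_pt_onD[OF X] rational_on_weights[OF X]
  have hnz: "uh (X t) i \<noteq> 0" "vh (X t) i \<noteq> 0" if "t \<in> S" for t
    using nz[OF that] by (simp_all add: uh_def vh_def)
  have "qr (s_pt i w) = qr w" "cr (s_pt i w) = cr w"
    "A (s_pt i w) j = (if j mod 3 = i mod 3 then 1 / A w i else A w j * A w i)"
    "T (s_pt i w) j = (if j mod 3 = i mod 3 then
        (uu w i * T w (i+1) * TB w (i+2) + TB w (i+1) * T w (i+2)) / (uh w i * TB w i) else T w j)"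
    "TB (s_pt i w) j = (if j mod 3 = i mod 3 then
        (vv w i * TB w (i+1) * T w (i+2) + T w (i+1) * TB w (i+2)) / (vh w i * T w i)
      else TB w j)" for w j
    by (simp_all add: A_def T_def TB_def s_pt_def)
  then show "rational_pt_on S (\<lambda>t. s_pt i (X t))"
    unfolding rational_pt_on_def using R nz hnz
    by (auto intro!: rational_on_intros)
qed

lemma preserves_rational_pts_w0_map: "preserves_rational_pts w0_map"
proof (rule preserves_rational_ptsI[OF w0_map_eq])
  fix S X
  assume X: "rational_pt_on S X"
    and nz3: "\<And>t. t \<in> S \<Longrightarrow> qr (X t) \<noteq> 0 \<and> cr (X t) \<noteq> 0 \<and> (\<forall>i<3. A (X t) i \<noteq> 0 \<and> TB (X t) i \<noteq> 0)"
  have nz: "A (X t) j \<noteq> 0" "TB (X t) j \<noteq> 0" "uu (X t) j \<noteq> 0" if "t \<in> S" for t j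
    using nz3[OF that, THEN conjunct2, THEN conjunct2, rule_format, of "j mod 3"] nz3[OF that]
    by (simp_all add: A_def TB_def uu_def)
  note R = rational_pt_onD[OF X] rational_on_weights[OF X]
  have "qr (w0_pt w) = qr w" "cr (w0_pt w) = 1 / cr w" "A (w0_pt w) j = A w j" "T (w0_pt w) j = T w j"
    "TB (w0_pt w) j = A w (j+1) ^ 2 *
        (TB w j * T w (j+1) * T w (j+2) + uu w (j+2) * T w j * TB w (j+1) * T w (j+2)
         + T w j * T w (j+1) * TB w (j+2) / uu w (j+1))
        / (A w (j+2) ^ 2 * TB w (j+1) * TB w (j+2))" for w j
    by (simp_all add: A_def T_def TB_def w0_pt_def uu_def mod_Suc_eq mod_Suc_Suc_eq mod_add_left_eq)
  then show "rational_pt_on S (\<lambda>t. w0_pt (X t))"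
    unfolding rational_pt_on_def using R nz nz3
    by (auto intro!: rational_on_intros)
qed

lemma rational_on_tauKN:
  assumes "rational_pt_on S X"
  shows "rational_on {t\<in>S. tauKN j M (X t) \<noteq> None} (\<lambda>t. the (tauKN j M (X t)))"
proof -
  have "preserves_rational_pts m" if "m \<in> {R1_map, R1inv_map, T4_map, T4inv_map}" for m
    using that unfolding R1_map_def R1inv_map_def T4_map_def T4inv_map_def
    by (auto intro!: preserves_rational_pts_word_map simp: preserves_rational_pts_pi_map
        preserves_rational_pts_s_map preserves_rational_pts_r_map preserves_rational_pts_w0_map)
  then have "preserves_rational_pts (word_map (tau_word j M))"
    using set_tau_word by (intro preserves_rational_pts_word_map) blast
  then have "rational_pt_on {t\<in>S. word_map (tau_word j M) (X t) \<noteq> None}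
      (\<lambda>t. the (word_map (tau_word j M) (X t)))"
    using assms unfolding preserves_rational_pts_def by blast
  then have "rational_on {t\<in>S. word_map (tau_word j M) (X t) \<noteq> None}
      (\<lambda>t. T (the (word_map (tau_word j M) (X t))) 1)"
    by (rule rational_pt_onD)
  then show ?thesis
    by (auto simp: tauKN_tau_word option.map_sel elim!: rational_on_cong)
qed

lemma rational_on_bilinear:
  assumes X: "rational_pt_on S X"
    and nz: "\<And>t. t \<in> S \<Longrightarrow> qr (X t) \<noteq> 0 \<and> cr (X t) \<noteq> 0 \<and> ar (X t) 0 \<noteq> 0"
    and defined: "\<And>t. t \<in> S \<Longrightarrow> \<forall>j\<in>{k-2..k+2}. \<forall>M\<in>{N-1..N+1}. tauKN j M (X t) \<noteq> None"
  shows "rational_on S (\<lambda>t. bilinear1 (X t) k N)" "rational_on S (\<lambda>t. bilinear2 (X t) k N)"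
    "rational_on S (\<lambda>t. bilinear3 (X t) k N)"
proof -
  have \<tau>: "rational_on S (\<lambda>t. the (tauKN j M (X t)))" if "j \<in> {k-2..k+2}" "M \<in> {N-1..N+1}" for j M
    using that defined by (auto intro: rational_on_subset[OF rational_on_tauKN[OF X]])
  have params: "rational_on S (\<lambda>t. qr (X t))" "rational_on S (\<lambda>t. cr (X t))"
    "rational_on S (\<lambda>t. ar (X t) 0)"
    using rational_pt_onD(1,2)[OF X] rational_pt_onD(3)[OF X, of 0] by (simp_all add: A_def)
  show "rational_on S (\<lambda>t. bilinear1 (X t) k N)" "rational_on S (\<lambda>t. bilinear2 (X t) k N)"
    "rational_on S (\<lambda>t. bilinear3 (X t) k N)"
    unfolding bilinear1_def bilinear2_def bilinear3_def Let_def
    by (intro rational_on_diff rational_on_mult rational_on_powi rational_on_power params \<tau>;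
        simp add: nz)+
qed

lemma positive_family_through:
  assumes "ar x 0 \<noteq> 0" "ar x 1 = qr x / ar x 0" "ar x 2 = qr x"
  obtains X S where "rational_pt_on S X" "\<i> \<in> S" "X \<i> = normal_pt x"
    "\<And>s. s \<in> {-1..1} \<Longrightarrow> of_real s \<in> S \<and> positive_PII (X (of_real s))"
proof -
  define B where "B z = \<bar>Re z\<bar> + \<bar>Im z\<bar>" for z
  define C where "C = 1 + B (qr x) + B (cr x) + B (ar x 0) + (\<Sum>j<3. B (T x j) + B (TB x j))"
  have B: "0 \<le> B z" for z by (simp add: B_def)
  have CB: "B (qr x) < C" "B (cr x) < C" "B (ar x 0) < C" "B (T x j) < C" "B (TB x j) < C" for j
  proof -
    have "B (T x j) + B (TB x j) \<le> (\<Sum>j<3. B (T x j) + B (TB x j))"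
      using B mod_less_divisor[of 3 j] by (auto simp: T_def TB_def intro!: member_le_sum[of "j mod 3"])
    moreover have "0 \<le> (\<Sum>j<3. B (T x j) + B (TB x j))" by (simp add: B sum_nonneg)
    ultimately show "B (qr x) < C" "B (cr x) < C" "B (ar x 0) < C" "B (T x j) < C" "B (TB x j) < C"
      using B[of "qr x"] B[of "cr x"] B[of "ar x 0"] B[of "T x j"] B[of "TB x j"]
      unfolding C_def by linarith+
  qed
  define c where "c = positive_curve C"
  \<comment> \<open>a_1 and a_2 are written through q and a_0, so that the constraints hold along the family\<close>
  define X where "X t = \<lparr> qr = c (qr x) t,
      ar = (\<lambda>j. [c (ar x 0) t, c (qr x) t / c (ar x 0) t, c (qr x) t] ! (j mod 3)),
      cr = c (cr x) t, tau = (\<lambda>j. c (T x j) t), taub = (\<lambda>j. c (TB x j) t) \<rparr>" for t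
  define S where "S = {t. c (ar x 0) t \<noteq> 0}"
  have rational_c: "rational_on S (c z)" for z
    unfolding c_def by (rule rational_on_positive_curve)
  have A_X: "A (X t) j = [c (ar x 0) t, c (qr x) t / c (ar x 0) t, c (qr x) t] ! (j mod 3)" for t j
    by (simp add: X_def A_def)
  have "rational_pt_on S X"
    unfolding rational_pt_on_def
  proof (intro conjI allI)
    fix i
    show "rational_on S (\<lambda>t. A (X t) i)"
      unfolding A_X using mod_3_cases[of i]
      by (auto simp: S_def intro!: rational_on_divide rational_c[unfolded S_def])
  qed (simp_all add: X_def T_def TB_def rational_c)
  moreover have "X \<i> = normal_pt x"
  proof -
    have "A x j = [ar x 0, qr x / ar x 0, qr x] ! (j mod 3)" for j
      using mod_3_cases[of j] assms by (auto simp: A_def)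
    then show ?thesis
      by (simp add: X_def normal_pt_def c_def positive_curve_ii fun_eq_iff)
  qed
  moreover have "\<i> \<in> S"
    using assms(1) by (simp add: S_def c_def positive_curve_ii)
  moreover have "of_real s \<in> S \<and> positive_PII (X (of_real s))" if "s \<in> {-1..1}" for s
  proof -
    have pos: "pos_real (c z (of_real s))" if "B z < C" for z
      using pos_real_positive_curve[of z C s] that \<open>s \<in> {-1..1}\<close> by (simp add: c_def B_def)
    then have "c (ar x 0) (of_real s) \<noteq> 0"
      using CB pos_real_nonzero by blast
    moreover have "normal_pt (X t) = X t" for t
      by (simp add: X_def normal_pt_def A_def T_def TB_def fun_eq_iff)
    ultimately show ?thesis
      using pos CB by (simp add: S_def positive_PII_iff X_def pos_real_intros)
  qed
  ultimately show thesis using that by blast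
qed

lemma bilinear_eq_0_by_continuation:
  assumes X: "rational_pt_on S X"
    and real: "\<And>s. s \<in> {-1..1} \<Longrightarrow> of_real s \<in> S \<and> positive_PII (X (of_real s))"
    and "t \<in> S" and "qr (X t) \<noteq> 0" "cr (X t) \<noteq> 0" "ar (X t) 0 \<noteq> 0"
    and "\<forall>j\<in>{k-2..k+2}. \<forall>M\<in>{N-1..N+1}. tauKN j M (X t) \<noteq> None"
  shows "bilinear1 (X t) k N = 0 \<and> bilinear2 (X t) k N = 0 \<and> bilinear3 (X t) k N = 0"
proof -
  define S' where "S' = {t\<in>S. qr (X t) \<noteq> 0 \<and> cr (X t) \<noteq> 0 \<and> ar (X t) 0 \<noteq> 0
      \<and> (\<forall>j\<in>{k-2..k+2}. \<forall>M\<in>{N-1..N+1}. tauKN j M (X t) \<noteq> None)}"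
  define Z where "Z = complex_of_real ` {-1..1}"
  have "rational_pt_on S' X"
    using X by (rule rational_pt_on_subset) (auto simp: S'_def)
  then have rational: "rational_on S' (\<lambda>t. bilinear1 (X t) k N)"
    "rational_on S' (\<lambda>t. bilinear2 (X t) k N)"
    "rational_on S' (\<lambda>t. bilinear3 (X t) k N)"
    by (rule rational_on_bilinear; simp add: S'_def)+
  have Z_infinite: "infinite Z"
    unfolding Z_def
    using finite_imageD[of complex_of_real "{-1..1::real}"] infinite_Icc[of "-1::real" 1]
    by (auto simp: inj_on_def)
  have Z_pos: "positive_PII (X t)" if "t \<in> Z" for t
    using that real by (auto simp: Z_def)
  have Z_S': "Z \<subseteq> S'"
  proof
    fix t assume "t \<in> Z"
    then show "t \<in> S'"
      using real Z_pos[of t] positive_PII_nonzero[of "X t"] tauKN_positive[of "X t"]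
      by (auto simp: Z_def S'_def)
  qed
  have "t \<in> S'"
    using assms(3-) by (simp add: S'_def)
  then show ?thesis
    using rational_on_eq_0[OF rational(1) Z_infinite Z_S' bilinear_positive(1)[OF Z_pos]]
      rational_on_eq_0[OF rational(2) Z_infinite Z_S' bilinear_positive(2)[OF Z_pos]]
      rational_on_eq_0[OF rational(3) Z_infinite Z_S' bilinear_positive(3)[OF Z_pos]]
    by blast
qed

theorem proposition3p5:
  fixes x :: pt and k N :: int
  assumes "qr x \<noteq> 0" and "cr x \<noteq> 0" and "ar x 0 \<noteq> 0"
    and "ar x 0 * ar x 1 * ar x 2 = qr x ^ 2"
    and "ar x 2 = qr x"
    and "\<forall>j\<in>{k-2..k+2}. \<forall>M\<in>{N-1..N+1}. tauKN j M x \<noteq> None"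
  shows
   "(let \<tau> = (\<lambda>j M. the (tauKN j M x)); Q = qr x ^ 2; \<gamma> = cr x; \<alpha>\<^sub>0 = ar x 0 in
      qr x powi (-3*k+4*N+2) * \<gamma>^2 * \<alpha>\<^sub>0 powi (-3) * \<tau> (k+1) N * \<tau> (k-2) (N+1)
        - Q powi (-3*k+4*N+2) * \<gamma>^4 * \<alpha>\<^sub>0 powi (-6) * \<tau> (k-1) N * \<tau> k (N+1)
        - \<tau> (k-1) (N+1) * \<tau> k N = 0
    \<and> qr x powi (-3*k-4*N-2) * \<gamma> powi (-2) * \<alpha>\<^sub>0 powi (-3) * \<tau> (k+1) (N+1) * \<tau> (k-2) N
        - Q powi (-3*k-4*N-2) * \<gamma> powi (-4) * \<alpha>\<^sub>0 powi (-6) * \<tau> k N * \<tau> (k-1) (N+1)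
        - \<tau> k (N+1) * \<tau> (k-1) N = 0
    \<and> \<tau> k (N+1) * \<tau> (k+1) (N-1)
        - qr x powi (k-4*N+1) * \<gamma> powi (-2) * \<alpha>\<^sub>0 * \<tau> (k+2) N * \<tau> (k-1) N
        - Q powi (-k+4*N-1) * \<gamma>^4 * \<alpha>\<^sub>0 powi (-2) * \<tau> k N * \<tau> (k+1) N = 0)"
proof -
  have "ar x 1 = qr x / ar x 0"
    using assms(1,3,4,5) by (simp add: field_simps power2_eq_square)
  then obtain X S where X: "rational_pt_on S X" "\<i> \<in> S" "X \<i> = normal_pt x"
    and real: "\<And>s. s \<in> {-1..1} \<Longrightarrow> of_real s \<in> S \<and> positive_PII (X (of_real s))"
    using positive_family_through assms(3,5) by metis
  have "bilinear1 (X \<i>) k N = 0 \<and> bilinear2 (X \<i>) k N = 0 \<and> bilinear3 (X \<i>) k N = 0"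
    using X(3) assms(1-3,6) tauKN_normal_pt
    by (intro bilinear_eq_0_by_continuation[OF X(1) real X(2)]) simp_all
  then have "bilinear1 x k N = 0 \<and> bilinear2 x k N = 0 \<and> bilinear3 x k N = 0"
    by (simp add: X(3) bilinear_normal_pt)
  then show ?thesis
    unfolding bilinear1_def bilinear2_def bilinear3_def Let_def .
qed

end
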